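(* Consider a signal–idler system of one bosonic signal mode $S$ and one bosonic idler mode $I$, with quadrature vector ${\bf R}=(q_S,p_S,q_I,p_I)^\top$, commutation relations $[R_i,R_j]=\mathrm{i}\Omega_{ij}$ with ${\bf \Omega}=\mathbb{I}_2\otimes(\mathrm{i}\sigma_y)$, covariance matrix $\Sigma_{ij}=\frac12\langle R_iR_j+R_jR_i\rangle-\langle R_i\rangle\langle R_j\rangle$ and first-moment vector $d_i=\langle R_i\rangle$. The signal is sent through the thermal lossy channel, which maps ${\bf d}=[{\bf d}_S^\top,{\bf d}_I^\top]^\top\mapsto[\eta{\bf d}_S^\top,{\bf d}_I^\top]^\top$ and ${\bf \Sigma}=\begin{bmatrix}{\bf \Sigma}_S & {\bf \Sigma}_{SI}\\ {\bf \Sigma}_{SI}^\top & {\bf \Sigma}_I\end{bmatrix}\mapsto\begin{bmatrix}\eta^2{\bf \Sigma}_S+y(\eta)\mathbb{I}_2 & \eta{\bf \Sigma}_{SI}\\ \eta{\bf \Sigma}_{SI}^\top & {\bf \Sigma}_I\end{bmatrix}$, with $y(\eta)=(1-\eta^2)(N_B+\frac12)$. Then, for the purpose of estimating $\eta$, the covariance matrix and first-moment vector of a generic input state of this channel (with a single-mode idler) can be canonically expressed as \begin{align*} {\bf d}=\begin{bmatrix} q \\ p \\ 0\\0\end{bmatrix},\quad {\bf \Sigma}=\begin{bmatrix} a{\bf S}(r) & {\bf R}(\phi){\bf C}\\ [{\bf R}(\phi){\bf C}]^\top & b\mathbb{I}_2\end{bmatrix}, \end{align*} where ${\bf S}(r)={\rm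 diag}(r,r^{-1})$, ${\bf R}(\phi)=\begin{bmatrix}\cos\phi & -\sin\phi\\ \sin\phi & \cos\phi\end{bmatrix}$, ${\bf C}={\rm diag}(c_+,c_-)$. Here all parameters are real and respect the constraints given by the Heisenberg relation ${\bf \Sigma}+\mathrm{i}{\bf \Omega}/2\succeq0$.
   Context: The reduction is without loss of generality because the channel commutes with any rotation applied to the signal and any symplectic (Gaussian unitary) transformation applied to the idler, so these can be applied to the input without changing the information about $\eta$. $N_B\geq0$ is the mean thermal photon number of the bath and $\eta$ is the lossy transmission parameter. *)

theory Defs
  imports Complex_Main "Jordan_Normal_Form.Matrix"
begin

text \<open>Two-mode (signal S = indices 0,1; idler I = indices 2,3) Gaussian data.
  Quadrature ordering R = (q_S, p_S, q_I, p_I).\<close>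

definition Jmat :: "real mat" where
  "Jmat = mat_of_rows_list 2 [[0, 1], [-1, 0]]"

definition Omega :: "real mat" where
  "Omega = four_block_mat Jmat (0\<^sub>m 2 2) (0\<^sub>m 2 2) Jmat"

text \<open>Heisenberg (uncertainty) relation  Sigma + i Omega / 2 \<succeq> 0 (positive semidefinite
  Hermitian matrix: the quadratic form is real and nonnegative).\<close>
definition heisenberg :: "real mat \<Rightarrow> bool" where
  "heisenberg \<Sigma> \<longleftrightarrow> (\<forall>z :: nat \<Rightarrow> complex.
     (let s = (\<Sum>i<4. \<Sum>j<4. cnj (z i) *
                 (complex_of_real (\<Sigma> $$ (i, j)) + \<i> * complex_of_real (Omega $$ (i, j)) / 2) * z j)
      in Im s = 0 \<and> 0 \<le> Re s))"

definition rotm :: "real \<Rightarrow> real mat" where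
  "rotm \<phi> = mat_of_rows_list 2 [[cos \<phi>, - sin \<phi>], [sin \<phi>, cos \<phi>]]"

definition sqzm :: "real \<Rightarrow> real mat" where
  "sqzm r = mat_of_rows_list 2 [[r, 0], [0, inverse r]]"

definition diag2 :: "real \<Rightarrow> real \<Rightarrow> real mat" where
  "diag2 x y = mat_of_rows_list 2 [[x, 0], [0, y]]"

definition ychan :: "real \<Rightarrow> real \<Rightarrow> real" where
  "ychan NB \<eta> = (1 - \<eta>\<^sup>2) * (NB + 1/2)"

definition chan_d :: "real \<Rightarrow> real vec \<Rightarrow> real vec" where
  "chan_d \<eta> d = vec 4 (\<lambda>i. (if i < 2 then \<eta> else 1) * d $ i)"

definition chan_cov :: "real \<Rightarrow> real \<Rightarrow> real mat \<Rightarrow> real mat" where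
  "chan_cov NB \<eta> \<Sigma> = mat 4 4 (\<lambda>(i, j).
      (if i < 2 then \<eta> else 1) * (if j < 2 then \<eta> else 1) * \<Sigma> $$ (i, j)
      + (if i = j \<and> i < 2 then ychan NB \<eta> else 0))"

text \<open>Single-mode symplectic matrix (Gaussian unitary on the idler, linear part).\<close>
definition symplectic2 :: "real mat \<Rightarrow> bool" where
  "symplectic2 M \<longleftrightarrow> M \<in> carrier_mat 2 2 \<and> M * Jmat * M\<^sup>T = Jmat"

definition locop :: "real \<Rightarrow> real mat \<Rightarrow> real mat" where
  "locop \<theta> M = four_block_mat (rotm \<theta>) (0\<^sub>m 2 2) (0\<^sub>m 2 2) M"

definition idler_disp :: "real \<Rightarrow> real \<Rightarrow> real vec" where
  "idler_disp w1 w2 = vec_of_list [0, 0, w1, w2]"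

definition canon_d :: "real \<Rightarrow> real \<Rightarrow> real vec" where
  "canon_d q p = vec_of_list [q, p, 0, 0]"

definition canon_cov :: "real \<Rightarrow> real \<Rightarrow> real \<Rightarrow> real \<Rightarrow> real \<Rightarrow> real \<Rightarrow> real mat" where
  "canon_cov a r \<phi> cp cm b =
     four_block_mat (a \<cdot>\<^sub>m sqzm r) (rotm \<phi> * diag2 cp cm)
                    ((rotm \<phi> * diag2 cp cm)\<^sup>T) (b \<cdot>\<^sub>m 1\<^sub>m 2)"

end

theory Submission
  imports Defs
begin

text \<open>The channel only rescales the signal part and adds isotropic noise y(\<eta>) I to the signal
  block, so it commutes with every local map made of a rotation of the signal and a linear map of
  the idler; when the idler map is symplectic, such a map also preserves the Heisenberg relation. A lower-triangular symplectic map brings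
  the idler block to its Williamson form b I. A signal rotation diagonalises the signal block, which
  is positive definite by the Heisenberg relation and hence of the form a S(r). A further idler
  rotation, which fixes b I, is chosen to diagonalise the Gram matrix of the correlation block; this
  makes its columns orthogonal, i.e. puts it into the form R(\<phi>) C. An idler displacement removes
  the idler mean.\<close>

section \<open>Two-by-two matrices\<close>

(* Keep the index 1 a numeral, and expand products of 2x2 matrices with index_mult_mat2. *)
declare One_nat_def [simp del] and index_mult_mat(1) [simp del]

lemma sum_atLeast0_lessThan_2: "(\<Sum>k = 0..<2::nat. f k) = f 0 + (f 1 :: 'a::comm_monoid_add)"
  by (simp add: numeral_2_eq_2 One_nat_def)

lemma index_mult_mat2 [simp]:
  assumes "dim_col A = 2" "dim_row B = 2" "i < dim_row A" "j < dim_col B"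
  shows "(A * B) $$ (i,j) = A $$ (i,0) * B $$ (0,j) + A $$ (i,1) * B $$ (1,j)"
proof -
  have "(A * B) $$ (i,j) = (\<Sum>k = 0..<2. A $$ (i,k) * B $$ (k,j))"
    using assms by (simp add: index_mult_mat(1) scalar_prod_def)
  then show ?thesis by (simp only: sum_atLeast0_lessThan_2)
qed

lemma mat2_eqI:
  assumes "dim_row A = 2" "dim_col A = 2" "dim_row B = 2" "dim_col B = 2"
    and "A $$ (0,0) = B $$ (0,0)" "A $$ (0,1) = B $$ (0,1)"
    and "A $$ (1,0) = B $$ (1,0)" "A $$ (1,1) = B $$ (1,1)"
  shows "A = B"
proof (rule eq_matI)
  fix i j assume "i < dim_row B" "j < dim_col B"
  with assms(3,4) have "i = 0 \<or> i = 1" "j = 0 \<or> j = 1" by auto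
  then show "A $$ (i,j) = B $$ (i,j)" using assms(5-) by auto
qed (use assms in auto)

lemma mat_of_rows_list2:
  "mat_of_rows_list 2 [[a, b], [c, d]] \<in> carrier_mat 2 2"
  "mat_of_rows_list 2 [[a, b], [c, d]] $$ (0,0) = a" "mat_of_rows_list 2 [[a, b], [c, d]] $$ (0,1) = b"
  "mat_of_rows_list 2 [[a, b], [c, d]] $$ (1,0) = c" "mat_of_rows_list 2 [[a, b], [c, d]] $$ (1,1) = d"
  by (auto simp: mat_of_rows_list_def)

lemmas dim_mat_of_rows_list2 = carrier_matD[OF mat_of_rows_list2(1)]

lemma rotm_index [simp]:
  "rotm \<theta> \<in> carrier_mat 2 2" "dim_row (rotm \<theta>) = 2" "dim_col (rotm \<theta>) = 2"
  "rotm \<theta> $$ (0,0) = cos \<theta>" "rotm \<theta> $$ (0,1) = - sin \<theta>"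
  "rotm \<theta> $$ (1,0) = sin \<theta>" "rotm \<theta> $$ (1,1) = cos \<theta>"
  by (simp_all add: mat_of_rows_list2 dim_mat_of_rows_list2 rotm_def)

lemma Jmat_index [simp]:
  "Jmat \<in> carrier_mat 2 2" "dim_row Jmat = 2" "dim_col Jmat = 2"
  "Jmat $$ (0,0) = 0" "Jmat $$ (0,1) = 1" "Jmat $$ (1,0) = -1" "Jmat $$ (1,1) = 0"
  by (simp_all add: mat_of_rows_list2 dim_mat_of_rows_list2 Jmat_def)

lemma sqzm_index [simp]:
  "sqzm r \<in> carrier_mat 2 2" "dim_row (sqzm r) = 2" "dim_col (sqzm r) = 2"
  "sqzm r $$ (0,0) = r" "sqzm r $$ (0,1) = 0" "sqzm r $$ (1,0) = 0" "sqzm r $$ (1,1) = inverse r"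
  by (simp_all add: mat_of_rows_list2 dim_mat_of_rows_list2 sqzm_def)

lemma diag2_index [simp]:
  "diag2 x y \<in> carrier_mat 2 2" "dim_row (diag2 x y) = 2" "dim_col (diag2 x y) = 2"
  "diag2 x y $$ (0,0) = x" "diag2 x y $$ (0,1) = 0" "diag2 x y $$ (1,0) = 0" "diag2 x y $$ (1,1) = y"
  by (simp_all add: mat_of_rows_list2 dim_mat_of_rows_list2 diag2_def)

lemma rotm_orthogonal: "rotm \<theta> * (rotm \<theta>)\<^sup>T = 1\<^sub>m 2"
  by (rule mat2_eqI) (simp_all add: algebra_simps)

lemma symplectic2I:
  assumes "M \<in> carrier_mat 2 2" "M $$ (0,0) * M $$ (1,1) - M $$ (0,1) * M $$ (1,0) = 1"
  shows "symplectic2 M"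
  unfolding symplectic2_def
  by (intro conjI assms(1) mat2_eqI) (use assms in \<open>simp_all add: algebra_simps\<close>)

lemma symplectic2_rotm: "symplectic2 (rotm \<theta>)"
  by (rule symplectic2I) (simp_all add: algebra_simps)

lemma congruence_mult:
  fixes A B X :: "'a::comm_semiring_0 mat"
  assumes "A \<in> carrier_mat n n" "B \<in> carrier_mat n n" "X \<in> carrier_mat n n"
  shows "(A * B) * X * (A * B)\<^sup>T = A * (B * X * B\<^sup>T) * A\<^sup>T"
proof -
  have transposes: "A\<^sup>T \<in> carrier_mat n n" "B\<^sup>T \<in> carrier_mat n n" using assms by auto
  have "(A * B) * X * (A * B)\<^sup>T = A * (B * X) * (B\<^sup>T * A\<^sup>T)"
    using assms by (simp add: transpose_mult[of A n n B n])
  also have "\<dots> = A * (B * X * B\<^sup>T) * A\<^sup>T"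
    using assms transposes by (simp add: assoc_mult_mat[of _ n n _ n _ n])
  finally show ?thesis .
qed

lemma transpose_congruence:
  fixes A X B :: "'a::comm_semiring_0 mat"
  assumes "A \<in> carrier_mat n n" "X \<in> carrier_mat n n" "B \<in> carrier_mat n n"
  shows "(A * X * B\<^sup>T)\<^sup>T = B * X\<^sup>T * A\<^sup>T"
  using assms by (simp add: transpose_mult[of _ n n _ n] assoc_mult_mat[of _ n n _ n _ n])

lemma symplectic2_mult:
  assumes "symplectic2 A" "symplectic2 B"
  shows "symplectic2 (A * B)"
proof -
  have A: "A \<in> carrier_mat 2 2" "A * Jmat * A\<^sup>T = Jmat"
    and B: "B \<in> carrier_mat 2 2" "B * Jmat * B\<^sup>T = Jmat"
    using assms by (auto simp: symplectic2_def)
  have "A * B * Jmat * (A * B)\<^sup>T = A * (B * Jmat * B\<^sup>T) * A\<^sup>T"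
    using A(1) B(1) by (simp add: congruence_mult)
  also have "\<dots> = Jmat" using A B by simp
  finally show ?thesis using A(1) B(1) by (simp add: symplectic2_def)
qed

section \<open>Single-mode normal forms\<close>

lemma exists_cos_sin_combination_zero: "\<exists>t. a * cos t + b * sin t = (0::real)"
proof (cases "b = 0")
  case True
  then show ?thesis by (intro exI[of _ "pi / 2"]) simp
next
  case False
  define t where "t = arctan (- a / b)"
  have "a * cos t + b * sin t = cos t * (a + b * tan t)"
    using cos_arctan_not_zero[of "- a / b"] by (simp add: t_def tan_def field_simps)
  also have "\<dots> = 0" using False by (simp add: t_def tan_arctan)
  finally show ?thesis by blast
qed

lemma polar_form:
  fixes x y :: real
  shows "\<exists>\<phi> \<rho>. x = \<rho> * cos \<phi> \<and> y = \<rho> * sin \<phi>"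
proof -
  let ?z = "Complex x y"
  have "x = cmod ?z * cos (Arg ?z)" by (metis complex.sel(1) Re_rcis rcis_cmod_Arg)
  moreover have "y = cmod ?z * sin (Arg ?z)" by (metis complex.sel(2) Im_rcis rcis_cmod_Arg)
  ultimately show ?thesis by blast
qed

lemma rotation_diagonalizes_symmetric:
  assumes "A \<in> carrier_mat 2 2" "A $$ (0,1) = A $$ (1,0)"
  shows "\<exists>\<theta> l1 l2. rotm \<theta> * A * (rotm \<theta>)\<^sup>T = diag2 l1 l2"
proof -
  obtain t where t: "A $$ (0,1) * cos t + (A $$ (0,0) - A $$ (1,1)) / 2 * sin t = 0"
    using exists_cos_sin_combination_zero by blast
  (* the off-diagonal entry of R(\<theta>) A R(\<theta>)^T is A01 cos 2\<theta> + (A00 - A11)/2 sin 2\<theta> *)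
  define \<theta> where "\<theta> = t / 2"
  have "t = 2 * \<theta>" by (simp add: \<theta>_def)
  with t have \<theta>: "A $$ (0,1) * ((cos \<theta>)\<^sup>2 - (sin \<theta>)\<^sup>2)
      + (A $$ (0,0) - A $$ (1,1)) * sin \<theta> * cos \<theta> = 0"
    by (simp add: cos_double sin_double)
  let ?D = "rotm \<theta> * A * (rotm \<theta>)\<^sup>T"
  have "?D $$ (0,1) = 0" "?D $$ (1,0) = 0"
    using assms \<theta> by (simp_all add: power2_eq_square algebra_simps)
  then have "?D = diag2 (?D $$ (0,0)) (?D $$ (1,1))"
    using assms(1) by (intro mat2_eqI) simp_all
  then show ?thesis by blast
qed

lemma orthogonal_to_unit_vector:
  fixes c s x y :: real
  assumes "c\<^sup>2 + s\<^sup>2 = 1" "c * x + s * y = 0"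
  shows "x = - s * (- s * x + c * y)" and "y = c * (- s * x + c * y)"
proof -
  have sy: "s * y = - (c * x)" and cx: "c * x = - (s * y)" using assms(2) by linarith+
  have "- s * (- s * x + c * y) = s * s * x - c * (s * y)" by (simp add: algebra_simps)
  also have "\<dots> = (c\<^sup>2 + s\<^sup>2) * x" unfolding sy by (simp add: algebra_simps power2_eq_square)
  finally show "x = - s * (- s * x + c * y)" using assms(1) by simp
  have "c * (- s * x + c * y) = - s * (c * x) + c * c * y" by (simp add: algebra_simps)
  also have "\<dots> = (c\<^sup>2 + s\<^sup>2) * y" unfolding cx by (simp add: algebra_simps power2_eq_square)
  finally show "y = c * (- s * x + c * y)" using assms(1) by simp
qed

lemma orthogonal_columns_polar:
  assumes "Y \<in> carrier_mat 2 2" and orth: "Y $$ (0,0) * Y $$ (0,1) + Y $$ (1,0) * Y $$ (1,1) = 0"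
  shows "\<exists>\<phi> cp cm. Y = rotm \<phi> * diag2 cp cm"
proof -
  obtain \<phi> cp where col0: "Y $$ (0,0) = cp * cos \<phi>" "Y $$ (1,0) = cp * sin \<phi>"
    using polar_form by blast
  show ?thesis
  proof (cases "cp = 0")
    case True
    obtain \<phi>' cm where "Y $$ (1,1) = cm * cos \<phi>'" "- Y $$ (0,1) = cm * sin \<phi>'"
      using polar_form by blast
    then have "Y $$ (1,1) = cos \<phi>' * cm" "Y $$ (0,1) = - sin \<phi>' * cm"
      by (simp_all add: mult.commute)
    then have "Y = rotm \<phi>' * diag2 0 cm"
      using assms(1) col0 True by (intro mat2_eqI) simp_all
    then show ?thesis by blast
  next
    case False
    with orth col0 have col1_orth: "cos \<phi> * Y $$ (0,1) + sin \<phi> * Y $$ (1,1) = 0"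
      by (simp add: algebra_simps) (metis distrib_left mult_eq_0_iff)
    define cm where "cm = - sin \<phi> * Y $$ (0,1) + cos \<phi> * Y $$ (1,1)"
    have "Y $$ (0,1) = - sin \<phi> * cm" "Y $$ (1,1) = cos \<phi> * cm"
      using orthogonal_to_unit_vector[OF sin_cos_squared_add2 col1_orth] unfolding cm_def by simp_all
    then have "Y = rotm \<phi> * diag2 cp cm"
      using assms(1) col0 by (intro mat2_eqI) (simp_all add: mult.commute)
    then show ?thesis by blast
  qed
qed

lemma singular_value_form:
  assumes "C \<in> carrier_mat 2 2"
  shows "\<exists>\<psi> \<phi> cp cm. C * (rotm \<psi>)\<^sup>T = rotm \<phi> * diag2 cp cm"
proof -
  have "(C\<^sup>T * C) $$ (0,1) = (C\<^sup>T * C) $$ (1,0)"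
    using assms by (simp add: mult.commute)
  (* diagonalising the Gram matrix makes the columns of C R(\<psi>)^T orthogonal *)
  then obtain \<psi> l1 l2 where \<psi>: "rotm \<psi> * (C\<^sup>T * C) * (rotm \<psi>)\<^sup>T = diag2 l1 l2"
    using rotation_diagonalizes_symmetric[of "C\<^sup>T * C"] assms by auto
  define Y where "Y = C * (rotm \<psi>)\<^sup>T"
  have Y: "Y \<in> carrier_mat 2 2" using assms by (simp add: Y_def)
  have "Y\<^sup>T * Y = rotm \<psi> * (C\<^sup>T * C) * (rotm \<psi>)\<^sup>T"
    using assms
    by (simp add: Y_def transpose_mult[of C 2 2 "(rotm \<psi>)\<^sup>T" 2] assoc_mult_mat[of _ 2 2 _ 2 _ 2])
  then have "(Y\<^sup>T * Y) $$ (0,1) = 0" by (simp add: \<psi>)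
  then have "Y $$ (0,0) * Y $$ (0,1) + Y $$ (1,0) * Y $$ (1,1) = 0" using Y by simp
  then show ?thesis using orthogonal_columns_polar[OF Y] unfolding Y_def by blast
qed

lemma williamson_single_mode:
  assumes D: "D \<in> carrier_mat 2 2" "D $$ (1,0) = D $$ (0,1)"
    and pos: "0 < D $$ (0,0)" "0 < D $$ (0,0) * D $$ (1,1) - (D $$ (0,1))\<^sup>2"
  shows "\<exists>M \<nu>. symplectic2 M \<and> 0 < \<nu> \<and> M * D * M\<^sup>T = \<nu> \<cdot>\<^sub>m 1\<^sub>m 2"
proof -
  define p where "p = D $$ (0,0)"
  define q where "q = D $$ (0,1)"
  define s where "s = D $$ (1,1)"
  define \<nu> where "\<nu> = sqrt (p * s - q\<^sup>2)"
  define \<alpha> where "\<alpha> = sqrt (\<nu> / p)"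
  (* the lower-triangular M clears the off-diagonal entry; \<alpha> balances the diagonal at \<nu> *)
  define M where "M = mat_of_rows_list 2 [[\<alpha>, 0], [- q / (\<alpha> * p), 1 / \<alpha>]]"
  have p: "0 < p" and \<nu>: "0 < \<nu>" and \<nu>2: "\<nu> * \<nu> = p * s - q\<^sup>2"
    using pos by (simp_all add: p_def q_def s_def \<nu>_def)
  then have \<alpha>: "0 < \<alpha>" and \<alpha>2: "\<alpha> * \<alpha> * p = \<nu>"
    by (simp_all add: \<alpha>_def)
  have Dpqs: "D $$ (0,0) = p" "D $$ (0,1) = q" "D $$ (1,0) = q" "D $$ (1,1) = s"
    using D(2) by (simp_all add: p_def q_def s_def)
  have M: "M \<in> carrier_mat 2 2" "M $$ (0,0) = \<alpha>" "M $$ (0,1) = 0"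
    "M $$ (1,0) = - q / (\<alpha> * p)" "M $$ (1,1) = 1 / \<alpha>"
    unfolding M_def by (rule mat_of_rows_list2)+
  note dims = carrier_matD[OF M(1)] carrier_matD[OF D(1)]
  have "symplectic2 M"
    using M \<alpha> by (intro symplectic2I) simp_all
  moreover have "M * D * M\<^sup>T = \<nu> \<cdot>\<^sub>m 1\<^sub>m 2"
  proof (rule mat2_eqI)
    have "(M * D * M\<^sup>T) $$ (1,1) = (p * s - q\<^sup>2) / (\<alpha> * \<alpha> * p)"
      using \<alpha> p by (simp add: M Dpqs dims field_simps power2_eq_square)
    also have "\<dots> = \<nu>" using \<nu> by (simp add: \<alpha>2 flip: \<nu>2)
    finally show "(M * D * M\<^sup>T) $$ (1,1) = (\<nu> \<cdot>\<^sub>m 1\<^sub>m 2) $$ (1,1)" by simp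
  qed (use \<alpha> p \<alpha>2 in \<open>simp_all add: M Dpqs dims field_simps\<close>)
  ultimately show ?thesis using \<nu> by blast
qed

lemma diag2_eq_smult_sqzm:
  assumes "0 < l1" "0 < l2"
  shows "diag2 l1 l2 = sqrt (l1 * l2) \<cdot>\<^sub>m sqzm (sqrt (l1 / l2))"
proof (rule mat2_eqI)
  have "sqrt (l1 * l2) * sqrt (l1 / l2) = sqrt (l1\<^sup>2)"
    using assms by (simp add: power2_eq_square flip: real_sqrt_mult)
  then show "diag2 l1 l2 $$ (0,0) = (sqrt (l1 * l2) \<cdot>\<^sub>m sqzm (sqrt (l1 / l2))) $$ (0,0)"
    using assms by simp
  have "inverse (sqrt (l1 / l2)) = sqrt (l2 / l1)" by (simp flip: real_sqrt_inverse)
  moreover have "sqrt (l1 * l2) * sqrt (l2 / l1) = sqrt (l2\<^sup>2)"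
    using assms by (simp add: power2_eq_square flip: real_sqrt_mult)
  ultimately have "sqrt (l1 * l2) * inverse (sqrt (l1 / l2)) = l2" using assms by simp
  then show "diag2 l1 l2 $$ (1,1) = (sqrt (l1 * l2) \<cdot>\<^sub>m sqzm (sqrt (l1 / l2))) $$ (1,1)"
    using assms by simp
qed simp_all

section \<open>The uncertainty relation\<close>

lemma sum_lessThan_4: "(\<Sum>k<4::nat. f k) = f 0 + f 1 + f 2 + (f 3 :: 'a::comm_monoid_add)"
proof -
  have "{..<4::nat} = {0,1,2,3}" by auto
  then show ?thesis by (simp add: add_ac)
qed

lemma index_congruence_mat:
  assumes "L \<in> carrier_mat m n" "X \<in> carrier_mat n n" "i < m" "j < m"
  shows "(L * X * L\<^sup>T) $$ (i,j) = (\<Sum>k<n. \<Sum>l<n. L $$ (i,k) * X $$ (k,l) * L $$ (j,l))"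
  using assms
  by (simp add: index_mult_mat(1) scalar_prod_def atLeast0LessThan sum_distrib_left sum_distrib_right mult.assoc)

lemma hermitian_form_pullback:
  fixes L :: "nat \<Rightarrow> nat \<Rightarrow> real" and H :: "nat \<Rightarrow> nat \<Rightarrow> complex"
  shows "(\<Sum>i\<in>I. \<Sum>j\<in>I. cnj (z i) * (\<Sum>k\<in>K. \<Sum>l\<in>K. of_real (L i k) * H k l * of_real (L j l)) * z j)
    = (\<Sum>k\<in>K. \<Sum>l\<in>K. cnj (\<Sum>i\<in>I. of_real (L i k) * z i) * H k l * (\<Sum>j\<in>I. of_real (L j l) * z j))"
  by (simp add: sum_distrib_left sum_distrib_right mult_ac sum.swap[of _ I K])

definition uncertainty_form :: "real mat \<Rightarrow> (nat \<Rightarrow> complex) \<Rightarrow> complex" where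
  "uncertainty_form X z = (\<Sum>i<4. \<Sum>j<4. cnj (z i) *
     (of_real (X $$ (i,j)) + \<i> * of_real (Omega $$ (i,j)) / 2) * z j)"

lemma heisenberg_iff_uncertainty_form:
  "heisenberg X \<longleftrightarrow> (\<forall>z. Im (uncertainty_form X z) = 0 \<and> 0 \<le> Re (uncertainty_form X z))"
  unfolding heisenberg_def uncertainty_form_def Let_def ..

lemma Omega_carrier: "Omega \<in> carrier_mat 4 4"
  unfolding Omega_def by (rule carrier_matI) simp_all

lemma uncertainty_form_congruence:
  assumes L: "L \<in> carrier_mat 4 4" and X: "X \<in> carrier_mat 4 4"
    and symp: "L * Omega * L\<^sup>T = Omega"
  shows "uncertainty_form (L * X * L\<^sup>T) z = uncertainty_form X (\<lambda>k. \<Sum>i<4. of_real (L $$ (i,k)) * z i)"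
proof -
  let ?H = "\<lambda>k l. of_real (X $$ (k,l)) + \<i> * of_real (Omega $$ (k,l)) / 2"
  have entry: "of_real ((L * X * L\<^sup>T) $$ (i,j)) + \<i> * of_real (Omega $$ (i,j)) / 2
      = (\<Sum>k<4. \<Sum>l<4. of_real (L $$ (i,k)) * ?H k l * of_real (L $$ (j,l)))"
    if "i < 4" "j < 4" for i j
  proof -
    have x: "(L * X * L\<^sup>T) $$ (i,j) = (\<Sum>k<4. \<Sum>l<4. L $$ (i,k) * X $$ (k,l) * L $$ (j,l))"
      by (rule index_congruence_mat[OF L X that])
    have omega: "Omega $$ (i,j) = (\<Sum>k<4. \<Sum>l<4. L $$ (i,k) * Omega $$ (k,l) * L $$ (j,l))"
      using index_congruence_mat[OF L Omega_carrier that] unfolding symp .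
    show ?thesis
      by (subst x, subst omega) (simp add: sum.distrib sum_distrib_left sum_divide_distrib algebra_simps)
  qed
  then have "uncertainty_form (L * X * L\<^sup>T) z = (\<Sum>i<4. \<Sum>j<4. cnj (z i) *
      (\<Sum>k<4. \<Sum>l<4. of_real (L $$ (i,k)) * ?H k l * of_real (L $$ (j,l))) * z j)"
    unfolding uncertainty_form_def by (intro sum.cong refl) simp
  also have "\<dots> = uncertainty_form X (\<lambda>k. \<Sum>i<4. of_real (L $$ (i,k)) * z i)"
    unfolding uncertainty_form_def by (rule hermitian_form_pullback)
  finally show ?thesis .
qed

lemma heisenberg_congruence:
  assumes "L \<in> carrier_mat 4 4" "X \<in> carrier_mat 4 4" "L * Omega * L\<^sup>T = Omega" "heisenberg X"
  shows "heisenberg (L * X * L\<^sup>T)"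
  using assms(4) unfolding heisenberg_iff_uncertainty_form uncertainty_form_congruence[OF assms(1-3)]
  by blast

lemma single_mode_uncertainty_bounds:
  fixes a b d :: real
  assumes form_nonneg: "\<And>u v. 0 \<le> Re (cnj u * of_real a * u + cnj u * (of_real b + \<i> / 2) * v
                                 + cnj v * (of_real b - \<i> / 2) * u + cnj v * of_real d * v)"
  shows "0 < a \<and> 0 < d \<and> 1/4 \<le> a * d - b\<^sup>2"
proof -
  have quadratic: "0 \<le> t\<^sup>2 * a - t + d" for t
    using form_nonneg[of "of_real t" \<i>] by (simp add: power2_eq_square mult_ac)
  have "0 \<le> a" using form_nonneg[of 1 0] by simp
  moreover have "a \<noteq> 0" using quadratic[of "d + 1"] by auto
  ultimately have a: "0 < a" by simp
  have "0 \<le> a * (a * d - b\<^sup>2 - 1/4)"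
    using form_nonneg[of "- (of_real b + \<i> / 2)" "of_real a"] by (simp add: power2_eq_square algebra_simps)
  with a have det: "1/4 \<le> a * d - b\<^sup>2" by (simp add: zero_le_mult_iff)
  then have "0 < a * d" using zero_le_power2[of b] by linarith
  with a det show ?thesis by (simp add: zero_less_mult_iff)
qed

lemma heisenberg_mode_bounds:
  assumes X: "X \<in> carrier_mat 4 4" and heis: "heisenberg X" and mode: "k = 0 \<or> k = 2"
    and sym: "X $$ (k + 1, k) = X $$ (k, k + 1)"
  shows "0 < X $$ (k,k) \<and> 0 < X $$ (k+1,k+1) \<and> 1/4 \<le> X $$ (k,k) * X $$ (k+1,k+1) - (X $$ (k,k+1))\<^sup>2"
proof (rule single_mode_uncertainty_bounds)
  fix u v :: complex
  let ?z = "\<lambda>i. if i = k then u else if i = k + 1 then v else 0"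
  have form: "uncertainty_form X ?z = cnj u * of_real (X $$ (k,k)) * u
      + cnj u * (of_real (X $$ (k,k+1)) + \<i> / 2) * v
      + cnj v * (of_real (X $$ (k,k+1)) - \<i> / 2) * u + cnj v * of_real (X $$ (k+1,k+1)) * v"
    using mode sym
    by (elim disjE) (simp_all add: uncertainty_form_def sum_lessThan_4 Omega_def algebra_simps flip: One_nat_def)
  have "0 \<le> Re (uncertainty_form X ?z)" using heis heisenberg_iff_uncertainty_form by blast
  then show "0 \<le> Re (cnj u * of_real (X $$ (k,k)) * u
      + cnj u * (of_real (X $$ (k,k+1)) + \<i> / 2) * v
      + cnj v * (of_real (X $$ (k,k+1)) - \<i> / 2) * u + cnj v * of_real (X $$ (k+1,k+1)) * v)"
    by (simp only: form)
qed

section \<open>Local operations and the lossy channel\<close>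

lemmas mult_carrier_mat2 [simp] = mult_carrier_mat[of _ 2 2 _ 2]

lemma mult_four_block_mat2:
  assumes "A1 \<in> carrier_mat 2 2" "B1 \<in> carrier_mat 2 2" "C1 \<in> carrier_mat 2 2" "D1 \<in> carrier_mat 2 2"
    and "A2 \<in> carrier_mat 2 2" "B2 \<in> carrier_mat 2 2" "C2 \<in> carrier_mat 2 2" "D2 \<in> carrier_mat 2 2"
  shows "four_block_mat A1 B1 C1 D1 * four_block_mat A2 B2 C2 D2
    = four_block_mat (A1 * A2 + B1 * C2) (A1 * B2 + B1 * D2) (C1 * A2 + D1 * C2) (C1 * B2 + D1 * D2)"
  using assms by (rule mult_four_block_mat)

lemma locop_carrier [simp]: "M \<in> carrier_mat 2 2 \<Longrightarrow> locop \<theta> M \<in> carrier_mat 4 4"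
  unfolding locop_def by (rule carrier_matI) simp_all

lemma locop_congruence:
  assumes M: "M \<in> carrier_mat 2 2"
    and blocks: "A \<in> carrier_mat 2 2" "B \<in> carrier_mat 2 2" "C \<in> carrier_mat 2 2" "D \<in> carrier_mat 2 2"
  shows "locop \<theta> M * four_block_mat A B C D * (locop \<theta> M)\<^sup>T
    = four_block_mat (rotm \<theta> * A * (rotm \<theta>)\<^sup>T) (rotm \<theta> * B * M\<^sup>T)
        (M * C * (rotm \<theta>)\<^sup>T) (M * D * M\<^sup>T)"
proof -
  have "locop \<theta> M * four_block_mat A B C D = four_block_mat (rotm \<theta> * A) (rotm \<theta> * B) (M * C) (M * D)"
    unfolding locop_def using M blocks by (simp add: mult_four_block_mat2)
  moreover have "(locop \<theta> M)\<^sup>T = four_block_mat (rotm \<theta>)\<^sup>T (0\<^sub>m 2 2) (0\<^sub>m 2 2) M\<^sup>T"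
    unfolding locop_def by (simp add: transpose_four_block_mat[OF rotm_index(1) zero_carrier_mat zero_carrier_mat M])
  ultimately show ?thesis
    using M blocks by (simp add: mult_four_block_mat2)
qed

lemma locop_preserves_Omega:
  assumes "symplectic2 M"
  shows "locop \<theta> M * Omega * (locop \<theta> M)\<^sup>T = Omega"
proof -
  have M: "M \<in> carrier_mat 2 2" "M * Jmat * M\<^sup>T = Jmat" using assms by (simp_all add: symplectic2_def)
  have R: "rotm \<theta> * Jmat * (rotm \<theta>)\<^sup>T = Jmat" using symplectic2_rotm by (simp add: symplectic2_def)
  have "locop \<theta> M * Omega * (locop \<theta> M)\<^sup>T = four_block_mat (rotm \<theta> * Jmat * (rotm \<theta>)\<^sup>T)
      (rotm \<theta> * 0\<^sub>m 2 2 * M\<^sup>T) (M * 0\<^sub>m 2 2 * (rotm \<theta>)\<^sup>T) (M * Jmat * M\<^sup>T)"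
    unfolding Omega_def using M by (intro locop_congruence) simp_all
  also have "\<dots> = Omega" using M R by (simp add: Omega_def)
  finally show ?thesis .
qed

lemma heisenberg_locop:
  assumes "symplectic2 M" "X \<in> carrier_mat 4 4" "heisenberg X"
  shows "heisenberg (locop \<theta> M * X * (locop \<theta> M)\<^sup>T)"
  using assms by (intro heisenberg_congruence locop_preserves_Omega) (simp_all add: symplectic2_def)

lemma chan_cov_four_block:
  assumes "A \<in> carrier_mat 2 2" "B \<in> carrier_mat 2 2" "C \<in> carrier_mat 2 2" "D \<in> carrier_mat 2 2"
  shows "chan_cov NB \<eta> (four_block_mat A B C D)
    = four_block_mat (\<eta>\<^sup>2 \<cdot>\<^sub>m A + ychan NB \<eta> \<cdot>\<^sub>m 1\<^sub>m 2) (\<eta> \<cdot>\<^sub>m B) (\<eta> \<cdot>\<^sub>m C) D"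
  by (rule eq_matI) (use assms in \<open>auto simp: chan_cov_def power2_eq_square\<close>)

lemma rotm_congruence_add_isotropic:
  assumes "A \<in> carrier_mat 2 2"
  shows "rotm \<theta> * (c \<cdot>\<^sub>m A + y \<cdot>\<^sub>m 1\<^sub>m 2) * (rotm \<theta>)\<^sup>T
    = c \<cdot>\<^sub>m (rotm \<theta> * A * (rotm \<theta>)\<^sup>T) + y \<cdot>\<^sub>m 1\<^sub>m 2"
proof -
  have "rotm \<theta> * (c \<cdot>\<^sub>m A + y \<cdot>\<^sub>m 1\<^sub>m 2) = c \<cdot>\<^sub>m (rotm \<theta> * A) + y \<cdot>\<^sub>m rotm \<theta>"
    using assms by (simp add: mult_add_distrib_mat[of "rotm \<theta>" 2 2 _ 2]
        mult_smult_distrib[of "rotm \<theta>" 2 2 _ 2])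
  moreover have "(c \<cdot>\<^sub>m (rotm \<theta> * A) + y \<cdot>\<^sub>m rotm \<theta>) * (rotm \<theta>)\<^sup>T
      = c \<cdot>\<^sub>m (rotm \<theta> * A * (rotm \<theta>)\<^sup>T) + y \<cdot>\<^sub>m (rotm \<theta> * (rotm \<theta>)\<^sup>T)"
    using assms by (simp add: add_mult_distrib_mat[of _ 2 2 _ "(rotm \<theta>)\<^sup>T" 2]
        mult_smult_assoc_mat[of _ 2 2 "(rotm \<theta>)\<^sup>T" 2])
  ultimately show ?thesis by (simp add: rotm_orthogonal)
qed

lemma rotm_congruence_smult_one: "rotm \<theta> * (c \<cdot>\<^sub>m 1\<^sub>m 2) * (rotm \<theta>)\<^sup>T = c \<cdot>\<^sub>m 1\<^sub>m 2"
  by (simp add: mult_smult_distrib[of "rotm \<theta>" 2 2 "1\<^sub>m 2" 2]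
      mult_smult_assoc_mat[of "rotm \<theta>" 2 2 "(rotm \<theta>)\<^sup>T" 2] rotm_orthogonal)

lemma split_four_block_mat2:
  assumes "X \<in> carrier_mat 4 4"
  obtains A B C D where "A \<in> carrier_mat 2 2" "B \<in> carrier_mat 2 2" "C \<in> carrier_mat 2 2"
    "D \<in> carrier_mat 2 2" "X = four_block_mat A B C D"
proof -
  obtain A B C D where "split_block X 2 2 = (A, B, C, D)" by (cases "split_block X 2 2") auto
  from split_block[OF this, of 2 2] assms show ?thesis using that by simp
qed

lemma chan_cov_locop_commute:
  assumes M: "M \<in> carrier_mat 2 2" and X: "X \<in> carrier_mat 4 4"
  shows "chan_cov NB \<eta> (locop \<theta> M * X * (locop \<theta> M)\<^sup>T) = locop \<theta> M * chan_cov NB \<eta> X * (locop \<theta> M)\<^sup>T"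
proof -
  obtain A B C D where blocks: "A \<in> carrier_mat 2 2" "B \<in> carrier_mat 2 2" "C \<in> carrier_mat 2 2"
    "D \<in> carrier_mat 2 2" and X_eq: "X = four_block_mat A B C D"
    using split_four_block_mat2[OF X] .
  have "rotm \<theta> * (\<eta> \<cdot>\<^sub>m B) * M\<^sup>T = \<eta> \<cdot>\<^sub>m (rotm \<theta> * B * M\<^sup>T)"
    and "M * (\<eta> \<cdot>\<^sub>m C) * (rotm \<theta>)\<^sup>T = \<eta> \<cdot>\<^sub>m (M * C * (rotm \<theta>)\<^sup>T)"
    using M blocks by (simp_all add: mult_smult_distrib[of _ 2 2 _ 2] mult_smult_assoc_mat[of _ 2 2 _ 2])
  then show ?thesis
    using M blocks
    by (simp add: X_eq locop_congruence chan_cov_four_block rotm_congruence_add_isotropic)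
qed

lemma chan_d_locop_commute:
  assumes M: "M \<in> carrier_mat 2 2" and v: "v \<in> carrier_vec 4"
  shows "chan_d \<eta> (locop \<theta> M *\<^sub>v v + idler_disp w1 w2) = locop \<theta> M *\<^sub>v chan_d \<eta> v + idler_disp w1 w2"
proof (rule eq_vecI)
  let ?g = "\<lambda>i::nat. if i < 2 then \<eta> else 1"
  have disp_dim: "dim_vec (idler_disp w1 w2) = 4" by (simp add: idler_disp_def)
  have disp: "?g i * idler_disp w1 w2 $ i = idler_disp w1 w2 $ i" for i
    by (cases "i < 2") (auto simp: idler_disp_def vec_of_list_index nth_Cons' simp del: vec_of_list_Cons)
  fix i assume "i < dim_vec (locop \<theta> M *\<^sub>v chan_d \<eta> v + idler_disp w1 w2)"
  then have i: "i < 4" by (simp add: disp_dim)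
  let ?L = "locop \<theta> M"
  have L_apply: "(?L *\<^sub>v w) $ i = (\<Sum>k<4. ?L $$ (i,k) * w $ k)" if "w \<in> carrier_vec 4" for w
    using i that carrier_matD[OF locop_carrier[OF M]] by (simp add: scalar_prod_def atLeast0LessThan)
  have block_diag: "?L $$ (i,k) = 0 \<or> (i < 2 \<longleftrightarrow> k < 2)" if "k < 4" for k
    using i that M by (auto simp: locop_def)
  have "?g i * (?L *\<^sub>v v) $ i = (\<Sum>k<4. ?g i * ?L $$ (i,k) * v $ k)"
    by (simp add: L_apply[OF v] sum_distrib_left mult.assoc)
  also have "\<dots> = (\<Sum>k<4. ?L $$ (i,k) * (?g k * v $ k))"
    using block_diag by (intro sum.cong refl) auto
  also have "\<dots> = (?L *\<^sub>v chan_d \<eta> v) $ i"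
    by (subst L_apply) (simp_all add: chan_d_def)
  finally have signal_gain: "?g i * (?L *\<^sub>v v) $ i = (?L *\<^sub>v chan_d \<eta> v) $ i" .
  have "chan_d \<eta> (?L *\<^sub>v v + idler_disp w1 w2) $ i = ?g i * (?L *\<^sub>v v) $ i + idler_disp w1 w2 $ i"
    using i M v by (simp add: chan_d_def disp_dim distrib_left disp)
  also have "\<dots> = (?L *\<^sub>v chan_d \<eta> v + idler_disp w1 w2) $ i"
    using i by (simp add: signal_gain disp_dim)
  finally show "chan_d \<eta> (?L *\<^sub>v v + idler_disp w1 w2) $ i = (?L *\<^sub>v chan_d \<eta> v + idler_disp w1 w2) $ i" .
qed (simp add: chan_d_def idler_disp_def)

section \<open>Normal form of the input state\<close>

lemma symmetric_four_block_decomposition: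
  assumes X: "X \<in> carrier_mat 4 4" and sym: "X\<^sup>T = X"
  obtains A B D where "A \<in> carrier_mat 2 2" "B \<in> carrier_mat 2 2" "D \<in> carrier_mat 2 2"
    "A $$ (1,0) = A $$ (0,1)" "D $$ (1,0) = D $$ (0,1)" "X = four_block_mat A B B\<^sup>T D"
proof -
  obtain A B C D where blocks: "A \<in> carrier_mat 2 2" "B \<in> carrier_mat 2 2" "C \<in> carrier_mat 2 2"
    "D \<in> carrier_mat 2 2" and X_eq: "X = four_block_mat A B C D"
    using split_four_block_mat2[OF X] .
  have X_sym: "X $$ (j,i) = X $$ (i,j)" if "i < 4" "j < 4" for i j
    using arg_cong[OF sym, of "\<lambda>Y. Y $$ (i,j)"] X that by simp
  have "C = B\<^sup>T"
  proof (rule eq_matI)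
    fix i j assume "i < dim_row B\<^sup>T" "j < dim_col B\<^sup>T"
    then show "C $$ (i,j) = B\<^sup>T $$ (i,j)"
      using X_sym[of "i + 2" j] blocks by (simp add: X_eq)
  qed (use blocks in auto)
  moreover have "A $$ (1,0) = A $$ (0,1)" "D $$ (1,0) = D $$ (0,1)"
    using X_sym[of 0 1] X_sym[of 2 3] blocks by (simp_all add: X_eq flip: One_nat_def)
  ultimately show ?thesis using that blocks X_eq by blast
qed

lemma add_idler_disp_canon_d:
  assumes "u \<in> carrier_vec 4"
  shows "u + idler_disp (- u $ 2) (- u $ 3) = canon_d (u $ 0) (u $ 1)"
proof (rule eq_vecI)
  fix i assume "i < dim_vec (canon_d (u $ 0) (u $ 1))"
  then have "i = 0 \<or> i = 1 \<or> i = 2 \<or> i = 3" by (auto simp: canon_d_def)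
  then show "(u + idler_disp (- u $ 2) (- u $ 3)) $ i = canon_d (u $ 0) (u $ 1) $ i"
    using assms
    by (elim disjE) (simp_all add: idler_disp_def canon_d_def vec_of_list_index del: vec_of_list_Cons)
qed (use assms in \<open>simp add: idler_disp_def canon_d_def\<close>)

lemma locop_congruence_symmetric:
  assumes "M \<in> carrier_mat 2 2" "A \<in> carrier_mat 2 2" "B \<in> carrier_mat 2 2" "D \<in> carrier_mat 2 2"
  shows "locop \<theta> M * four_block_mat A B B\<^sup>T D * (locop \<theta> M)\<^sup>T
    = four_block_mat (rotm \<theta> * A * (rotm \<theta>)\<^sup>T) (rotm \<theta> * B * M\<^sup>T)
        (rotm \<theta> * B * M\<^sup>T)\<^sup>T (M * D * M\<^sup>T)"
proof -
  have "(rotm \<theta> * B * M\<^sup>T)\<^sup>T = M * B\<^sup>T * (rotm \<theta>)\<^sup>T"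
    using assms by (intro transpose_congruence) simp_all
  then show ?thesis using assms by (simp add: locop_congruence)
qed

lemma canon_cov_of_heisenberg_blocks:
  assumes heis: "heisenberg (four_block_mat (diag2 l1 l2)
    (rotm \<phi> * diag2 cp cm) (rotm \<phi> * diag2 cp cm)\<^sup>T (b \<cdot>\<^sub>m 1\<^sub>m 2))"
    (is "heisenberg ?X")
  shows "\<exists>a r. 0 < r \<and> ?X = canon_cov a r \<phi> cp cm b"
proof -
  have "?X \<in> carrier_mat 4 4" by (rule carrier_matI) simp_all
  then have "0 < l1" "0 < l2" using heisenberg_mode_bounds[OF _ heis, of 0] by simp_all
  then have "?X = canon_cov (sqrt (l1 * l2)) (sqrt (l1 / l2)) \<phi> cp cm b"
    by (simp add: canon_cov_def diag2_eq_smult_sqzm)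
  moreover have "0 < sqrt (l1 / l2)" using \<open>0 < l1\<close> \<open>0 < l2\<close> by simp
  ultimately show ?thesis by blast
qed

lemma covariance_normal_form:
  assumes \<Sigma>: "\<Sigma> \<in> carrier_mat 4 4" "\<Sigma>\<^sup>T = \<Sigma>" and heis: "heisenberg \<Sigma>"
  shows "\<exists>\<theta> M a r \<phi> cp cm b. symplectic2 M \<and> 0 < r
    \<and> locop \<theta> M * \<Sigma> * (locop \<theta> M)\<^sup>T = canon_cov a r \<phi> cp cm b"
proof -
  obtain A B D where blocks: "A \<in> carrier_mat 2 2" "B \<in> carrier_mat 2 2" "D \<in> carrier_mat 2 2"
    and A_sym: "A $$ (1,0) = A $$ (0,1)" and D_sym: "D $$ (1,0) = D $$ (0,1)"
    and \<Sigma>_eq: "\<Sigma> = four_block_mat A B B\<^sup>T D"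
    using symmetric_four_block_decomposition[OF \<Sigma>] .
  have "0 < D $$ (0,0)" "0 < D $$ (0,0) * D $$ (1,1) - (D $$ (0,1))\<^sup>2"
    using heisenberg_mode_bounds[OF \<Sigma>(1) heis, of 2] blocks D_sym
    by (simp_all add: \<Sigma>_eq flip: One_nat_def)
  then obtain M0 \<nu> where M0: "symplectic2 M0" "M0 * D * M0\<^sup>T = \<nu> \<cdot>\<^sub>m 1\<^sub>m 2"
    using williamson_single_mode[OF blocks(3) D_sym] by blast
  then have M0_carrier: "M0 \<in> carrier_mat 2 2" by (simp add: symplectic2_def)
  obtain \<theta> l1 l2 where \<theta>: "rotm \<theta> * A * (rotm \<theta>)\<^sup>T = diag2 l1 l2"
    using rotation_diagonalizes_symmetric[OF blocks(1) A_sym[symmetric]] by blast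
  obtain \<psi> \<phi> cp cm where \<psi>: "rotm \<theta> * B * M0\<^sup>T * (rotm \<psi>)\<^sup>T = rotm \<phi> * diag2 cp cm"
    using singular_value_form[of "rotm \<theta> * B * M0\<^sup>T"] blocks M0_carrier by auto
  define M where "M = rotm \<psi> * M0"
  have M: "symplectic2 M" "M \<in> carrier_mat 2 2"
    using M0 M0_carrier symplectic2_rotm symplectic2_mult by (simp_all add: M_def)
  have correlations: "rotm \<theta> * B * M\<^sup>T = rotm \<phi> * diag2 cp cm"
    using \<psi> blocks M0_carrier
    by (simp add: M_def transpose_mult[of _ 2 2 _ 2] assoc_mult_mat[of _ 2 2 _ 2 _ 2])
  have idler: "M * D * M\<^sup>T = \<nu> \<cdot>\<^sub>m 1\<^sub>m 2"
    using congruence_mult[of "rotm \<psi>" 2 M0 D] blocks M0_carrier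
    by (simp add: M_def M0(2) rotm_congruence_smult_one)
  have "locop \<theta> M * \<Sigma> * (locop \<theta> M)\<^sup>T
      = four_block_mat (diag2 l1 l2) (rotm \<phi> * diag2 cp cm) (rotm \<phi> * diag2 cp cm)\<^sup>T (\<nu> \<cdot>\<^sub>m 1\<^sub>m 2)"
    using M blocks by (simp add: \<Sigma>_eq locop_congruence_symmetric \<theta> correlations idler)
  moreover have "heisenberg (locop \<theta> M * \<Sigma> * (locop \<theta> M)\<^sup>T)"
    using heisenberg_locop[OF M(1) \<Sigma>(1) heis] .
  ultimately obtain a r where "0 < r" "locop \<theta> M * \<Sigma> * (locop \<theta> M)\<^sup>T = canon_cov a r \<phi> cp cm \<nu>"
    using canon_cov_of_heisenberg_blocks by metis
  with M(1) show ?thesis by blast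
qed

theorem lemma7:
  fixes d :: "real vec" and \<Sigma> :: "real mat"
  assumes "d \<in> carrier_vec 4" and "\<Sigma> \<in> carrier_mat 4 4" and "\<Sigma>\<^sup>T = \<Sigma>"
    and "heisenberg \<Sigma>"
  shows "\<exists>\<theta> M w1 w2 q p a r \<phi> cp cm b.
     symplectic2 M \<and>
     locop \<theta> M *\<^sub>v d + idler_disp w1 w2 = canon_d q p \<and>
     locop \<theta> M * \<Sigma> * (locop \<theta> M)\<^sup>T = canon_cov a r \<phi> cp cm b \<and>
     r > 0 \<and> heisenberg (canon_cov a r \<phi> cp cm b) \<and>
     (\<forall>NB \<eta> d' \<Sigma>'. d' \<in> carrier_vec 4 \<longrightarrow> \<Sigma>' \<in> carrier_mat 4 4 \<longrightarrow>
        chan_d \<eta> (locop \<theta> M *\<^sub>v d' + idler_disp w1 w2)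
          = locop \<theta> M *\<^sub>v chan_d \<eta> d' + idler_disp w1 w2 \<and>
        chan_cov NB \<eta> (locop \<theta> M * \<Sigma>' * (locop \<theta> M)\<^sup>T)
          = locop \<theta> M * chan_cov NB \<eta> \<Sigma>' * (locop \<theta> M)\<^sup>T)"
proof -
  obtain \<theta> M a r \<phi> cp cm b where M: "symplectic2 M" and r: "0 < r"
    and cov: "locop \<theta> M * \<Sigma> * (locop \<theta> M)\<^sup>T = canon_cov a r \<phi> cp cm b"
    using covariance_normal_form[OF assms(2-4)] by blast
  have M_carrier: "M \<in> carrier_mat 2 2" using M by (simp add: symplectic2_def)
  let ?u = "locop \<theta> M *\<^sub>v d"
  have disp: "?u + idler_disp (- ?u $ 2) (- ?u $ 3) = canon_d (?u $ 0) (?u $ 1)"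
    using mult_mat_vec_carrier[OF locop_carrier[OF M_carrier] assms(1)] by (rule add_idler_disp_canon_d)
  have "heisenberg (canon_cov a r \<phi> cp cm b)"
    using heisenberg_locop[OF M assms(2,4), of \<theta>] unfolding cov .
  moreover have "\<forall>NB \<eta> d' \<Sigma>'. d' \<in> carrier_vec 4 \<longrightarrow> \<Sigma>' \<in> carrier_mat 4 4 \<longrightarrow>
      chan_d \<eta> (locop \<theta> M *\<^sub>v d' + idler_disp (- ?u $ 2) (- ?u $ 3))
        = locop \<theta> M *\<^sub>v chan_d \<eta> d' + idler_disp (- ?u $ 2) (- ?u $ 3) \<and>
      chan_cov NB \<eta> (locop \<theta> M * \<Sigma>' * (locop \<theta> M)\<^sup>T)
        = locop \<theta> M * chan_cov NB \<eta> \<Sigma>' * (locop \<theta> M)\<^sup>T"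
    using chan_d_locop_commute[OF M_carrier] chan_cov_locop_commute[OF M_carrier] by blast
  ultimately show ?thesis using M r cov disp by blast
qed

end
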